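(* Let $C$ be the Cantor set, $\psi_{\mathcal{H}}$ an increasing submodular setfunction on the clopen subsets of $C$ with $\psi_{\mathcal{H}}(\emptyset)=0$, let $\psi_{\mathcal{K}}(K)=\inf\{\psi_{\mathcal{H}}(H)\colon H \text{ clopen},\ K\subseteq H\}$ for compact $K\subseteq C$, and let $\psi_{\mathcal{B}}(B)=\sup\{\psi_{\mathcal{K}}(K)\colon K\subseteq B \text{ compact}\}$ for Borel $B\subseteq C$. Let $q\in\mathbb{N}$ and let $F\colon C\to[q]$ be Borel measurable. Then for every $\varepsilon>0$ there exists a continuous map $G\colon C\to[q]$ such that $d(\psi_{\mathcal{B}}\circ F^{-1},\psi_{\mathcal{B}}\circ G^{-1})<\varepsilon$.
   Context: A setfunction is increasing if $X\subseteq Y$ implies $\varphi(X)\le\varphi(Y)$ and submodular if $\varphi(X)+\varphi(Y)\ge\varphi(X\cap Y)+\varphi(X\cup Y)$. For a setfunction $\varphi$ on a set-algebra $(J,\mathcal{B})$ and a map $F\colon J\to[k]$ with $F^{-1}(i)\in\mathcal{B}$, $\varphi\circ F^{-1}$ is the setfunction $A\mapsto\varphi(F^{-1}(A))$ on $2^{[k]}$ (a quotient of $\varphi$); $Q_k(\varphi)\subseteq\mathbb{R}^{2^k}$ is the set of all quotients of $\varphi$ on $[k]$. The pseudometric $d$ between setfunctions is $d(\varphi_1,\varphi_2)=\sum_{k=1}^\infty 2^{-k}d_H^{(k)}(Q_k(\varphi_1),Q_k(\varphi_2))$, where $d_H^{(k)}$ is the Hausdorff distance in Euclidean $\mathbb{R}^{2^k}$.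 ($[q]$ carries the discrete topology.) *)

theory Defs
  imports "HOL-Analysis.Analysis" "HOL-Probability.Probability"
begin

fun cantor_approx :: "nat \<Rightarrow> real set" where
  "cantor_approx 0 = {0..1}"
| "cantor_approx (Suc n) =
     (\<lambda>x. x / 3) ` cantor_approx n \<union> (\<lambda>x. x / 3 + 2 / 3) ` cantor_approx n"

definition cantor_set :: "real set" where
  "cantor_set = (\<Inter>n. cantor_approx n)"

definition clopen_in_C :: "real set \<Rightarrow> bool" where
  "clopen_in_C H \<longleftrightarrow> openin (top_of_set cantor_set) H \<and> closedin (top_of_set cantor_set) H"

definition increasing_on :: "'a set set \<Rightarrow> ('a set \<Rightarrow> real) \<Rightarrow> bool" where
  "increasing_on \<B> \<phi> \<longleftrightarrow> (\<forall>X\<in>\<B>. \<forall>Y\<in>\<B>. X \<subseteq> Y \<longrightarrow> \<phi> X \<le> \<phi> Y)"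

definition submodular_on :: "'a set set \<Rightarrow> ('a set \<Rightarrow> real) \<Rightarrow> bool" where
  "submodular_on \<B> \<phi> \<longleftrightarrow>
     (\<forall>X\<in>\<B>. \<forall>Y\<in>\<B>. \<phi> X + \<phi> Y \<ge> \<phi> (X \<inter> Y) + \<phi> (X \<union> Y))"

definition psiK :: "(real set \<Rightarrow> real) \<Rightarrow> real set \<Rightarrow> real" where
  "psiK \<psi>H K = Inf {\<psi>H H | H. clopen_in_C H \<and> K \<subseteq> H}"

definition psiB :: "(real set \<Rightarrow> real) \<Rightarrow> real set \<Rightarrow> real" where
  "psiB \<psi>H B = Sup {psiK \<psi>H K | K. compact K \<and> K \<subseteq> B}"

text \<open>[k] = {1..k}. A setfunction on 2^[k] is represented as a function
  nat set => real; only its values on subsets of [k] matter (we normalise to 0 elsewhere).\<close>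

definition quotients :: "nat \<Rightarrow> (nat set \<Rightarrow> real) \<Rightarrow> nat \<Rightarrow> (nat set \<Rightarrow> real) set" where
  "quotients q \<phi> k =
     {(\<lambda>A. if A \<subseteq> {1..k} then \<phi> {i \<in> {1..q}. g i \<in> A} else 0) | g.
        g ` {1..q} \<subseteq> {1..k}}"

definition edist :: "nat \<Rightarrow> (nat set \<Rightarrow> real) \<Rightarrow> (nat set \<Rightarrow> real) \<Rightarrow> real" where
  "edist k u v = sqrt (\<Sum>A\<in>Pow {1..k}. (u A - v A)\<^sup>2)"

text \<open>Hausdorff distance (used here only for nonempty finite sets).\<close>
definition hausd :: "nat \<Rightarrow> (nat set \<Rightarrow> real) set \<Rightarrow> (nat set \<Rightarrow> real) set \<Rightarrow> real" where
  "hausd k S T = max (SUP x\<in>S. INF y\<in>T. edist k x y) (SUP y\<in>T. INF x\<in>S. edist k x y)"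

definition setfun_dist :: "nat \<Rightarrow> (nat set \<Rightarrow> real) \<Rightarrow> (nat set \<Rightarrow> real) \<Rightarrow> real" where
  "setfun_dist q \<phi>1 \<phi>2 =
     (\<Sum>k. (1/2) ^ (Suc k) * hausd (Suc k) (quotients q \<phi>1 (Suc k)) (quotients q \<phi>2 (Suc k)))"

end

theory Submission
  imports Defs
begin

text \<open>The outer capacity generated by \<open>\<psi>\<^sub>H\<close> (sup over clopen subsets on open sets, then inf
  over open supersets) is strongly subadditive by submodularity and, by compactness, continuous
  along increasing sequences and along decreasing sequences of compact sets. It is therefore a
  Choquet capacity, so Borel subsets of the Cantor set, being Souslin sets, are capacitable: on
  them \<open>\<psi>\<^sub>B\<close> is this outer capacity. Each fibre of \<open>F\<close> can thus be squeezed between a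
  compact set and an open set of almost the same capacity, and since the Cantor set is
  zero-dimensional a clopen partition can be fitted between them. Strong subadditivity turns the
  fibrewise errors into a uniform bound on \<open>|\<psi>\<^sub>B(F\<^sup>-\<^sup>1 S) - \<psi>\<^sub>B(G\<^sup>-\<^sup>1 S)|\<close>, and
  a uniform bound \<open>c\<close> on two setfunctions bounds their distance \<open>d\<close> by \<open>3c\<close>.\<close>

abbreviation cantor :: "real set" (\<open>\<C>\<close>) where
  "\<C> \<equiv> cantor_set"

lemma cantor_approx_subset: "cantor_approx n \<subseteq> {0..1}"
  by (induction n) auto

lemma compact_cantor_approx: "compact (cantor_approx n)"
proof (induction n)
  case (Suc n)
  have "compact ((\<lambda>x. x / 3) ` cantor_approx n)" "compact ((\<lambda>x. x / 3 + 2/3) ` cantor_approx n)"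
    by (rule compact_continuous_image[OF _ Suc], auto intro!: continuous_intros)+
  then show ?case by (simp add: compact_Un)
qed simp

lemma compact_cantor_set: "compact \<C>"
proof -
  have "closed \<C>"
    unfolding cantor_set_def by (intro closed_INT ballI compact_imp_closed compact_cantor_approx)
  moreover have "bounded \<C>"
    using cantor_approx_subset[of 0] unfolding cantor_set_def
    by (intro bounded_subset[OF bounded_closed_interval]) blast
  ultimately show ?thesis by (simp add: compact_eq_bounded_closed)
qed

lemma interval_in_third_image:
  fixes a b c :: real
  assumes "{a..b} \<subseteq> (\<lambda>x. x / 3 + c) ` A" shows "{3 * (a - c)..3 * (b - c)} \<subseteq> A"
proof
  fix z assume "z \<in> {3 * (a - c)..3 * (b - c)}"
  then have "z / 3 + c \<in> {a..b}"
    by auto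
  then obtain w where "w \<in> A" "z / 3 + c = w / 3 + c"
    using assms by blast
  then show "z \<in> A"
    by simp
qed

lemma interval_in_cantor_approx_length:
  "a \<le> b \<Longrightarrow> {a..b} \<subseteq> cantor_approx n \<Longrightarrow> b - a \<le> (1/3)^n"
proof (induction n arbitrary: a b)
  case (Suc n)
  let ?A = "cantor_approx n"
  let ?L = "(\<lambda>x. x / 3 + 0) ` ?A" and ?R = "(\<lambda>x. x / 3 + 2/3) ` ?A"
  have L: "?L \<subseteq> {0..1/3}" and R: "?R \<subseteq> {2/3..1}"
    using cantor_approx_subset[of n] by auto
  have ab: "{a..b} \<subseteq> ?L \<union> ?R"
    using Suc.prems by simp
  have subset_other: "X \<subseteq> Y \<union> Z \<Longrightarrow> X \<inter> Z = {} \<Longrightarrow> X \<subseteq> Y" for X Y Z :: "real set"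
    by blast
  obtain c where "{a..b} \<subseteq> (\<lambda>x. x / 3 + c) ` ?A"
  proof (cases "b < 1/2")
    case True
    then have "{a..b} \<inter> ?R = {}"
      using R by fastforce
    then show ?thesis
      by (intro that[of 0] subset_other[OF ab])
  next
    case False
    have "1/2 \<notin> {a..b}"
    proof
      assume "1/2 \<in> {a..b}"
      then have "1/2 \<in> {0..1/3} \<union> {2/3..1::real}"
        using ab L R by blast
      then show False by simp
    qed
    with False have "1/2 < a"
      by auto
    then have "{a..b} \<inter> ?L = {}"
      using L by fastforce
    then show ?thesis
      using ab by (intro that[of "2/3"] subset_other[of _ ?R ?L]) auto
  qed
  then have "{3 * (a - c)..3 * (b - c)} \<subseteq> ?A"
    by (rule interval_in_third_image)
  with Suc.IH[of "3 * (a - c)" "3 * (b - c)"] Suc.prems show ?case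
    by simp
qed simp

lemma not_in_cantor_set_between:
  assumes "u < v" obtains z where "u < z" "z < v" "z \<notin> \<C>"
proof -
  define a where "a = (2 * u + v) / 3"
  define b where "b = (u + 2 * v) / 3"
  have ab: "a < b" "{a..b} \<subseteq> {u<..<v}"
    using assms by (auto simp: a_def b_def)
  obtain n where n: "(1/3::real)^n < b - a"
    using real_arch_pow_inv[of "b - a" "1/3"] ab by auto
  have "\<not> {a..b} \<subseteq> cantor_approx n"
    using interval_in_cantor_approx_length[of a b n] ab n by linarith
  then obtain z where z: "z \<in> {a..b}" "z \<notin> cantor_approx n"
    by blast
  then have "z \<notin> \<C>"
    unfolding cantor_set_def by blast
  moreover have "u < z" "z < v"
    using z(1) ab(2) by auto
  ultimately show ?thesis
    using that by blast
qed

lemma clopen_in_C_subset: "clopen_in_C H \<Longrightarrow> H \<subseteq> \<C>"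
  unfolding clopen_in_C_def by (meson openin_imp_subset)

lemma compact_clopen_in_C: "clopen_in_C H \<Longrightarrow> compact H"
  unfolding clopen_in_C_def by (meson closedin_compact compact_cantor_set)

lemma clopen_in_C_open_trace: "clopen_in_C H \<Longrightarrow> \<exists>U. open U \<and> H = \<C> \<inter> U"
  unfolding clopen_in_C_def by (meson openin_open)

lemma clopen_in_C_empty [simp]: "clopen_in_C {}"
  and clopen_in_C_cantor_set [simp]: "clopen_in_C \<C>"
  unfolding clopen_in_C_def by auto

lemma clopen_in_C_Un: "clopen_in_C A \<Longrightarrow> clopen_in_C B \<Longrightarrow> clopen_in_C (A \<union> B)"
  and clopen_in_C_Int: "clopen_in_C A \<Longrightarrow> clopen_in_C B \<Longrightarrow> clopen_in_C (A \<inter> B)"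
  and clopen_in_C_Diff: "clopen_in_C A \<Longrightarrow> clopen_in_C B \<Longrightarrow> clopen_in_C (A - B)"
  unfolding clopen_in_C_def by auto

lemma clopen_in_C_UN:
  "finite T \<Longrightarrow> (\<And>t. t \<in> T \<Longrightarrow> clopen_in_C (W t)) \<Longrightarrow> clopen_in_C (\<Union>t\<in>T. W t)"
  by (induction T rule: finite_induct) (auto intro: clopen_in_C_Un)

lemma clopen_in_C_interval:
  assumes "a \<notin> \<C>" "b \<notin> \<C>" shows "clopen_in_C (\<C> \<inter> {a<..<b})"
proof -
  have "\<C> \<inter> {a<..<b} = \<C> \<inter> {a..b}"
    using assms by (auto simp: less_le)
  then show ?thesis unfolding clopen_in_C_def
    by (metis closed_atLeastAtMost closedin_closed_Int open_greaterThanLessThan openin_open_Int)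
qed

text \<open>Zero-dimensionality: an interval whose endpoints avoid the Cantor set cuts out a clopen
  subset of it.\<close>

lemma clopen_between_compact_open:
  assumes K: "compact K" "K \<subseteq> \<C>" and U: "open U" "K \<subseteq> U"
  obtains W where "clopen_in_C W" "K \<subseteq> W" "W \<subseteq> U"
proof -
  have "\<exists>a b. a \<notin> \<C> \<and> b \<notin> \<C> \<and> x \<in> {a<..<b} \<and> {a<..<b} \<subseteq> U" if "x \<in> K" for x
  proof -
    obtain r where r: "r > 0" "ball x r \<subseteq> U"
      using U \<open>x \<in> K\<close> by (meson open_contains_ball subsetD)
    obtain a where "x - r < a" "a < x" "a \<notin> \<C>"
      using not_in_cantor_set_between[of "x - r" x] r by auto
    moreover obtain b where "x < b" "b < x + r" "b \<notin> \<C>"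
      using not_in_cantor_set_between[of x "x + r"] r by auto
    moreover have "{a<..<b} \<subseteq> ball x r"
      using calculation by (auto simp: dist_real_def)
    ultimately show ?thesis
      using r by (intro exI[of _ a] exI[of _ b]) auto
  qed
  then obtain a b where ab: "\<And>x. x \<in> K \<Longrightarrow> a x \<notin> \<C> \<and> b x \<notin> \<C> \<and> x \<in> {a x<..<b x} \<and> {a x<..<b x} \<subseteq> U"
    by metis
  have "K \<subseteq> (\<Union>x\<in>K. {a x<..<b x})"
    using ab by blast
  then obtain T where T: "T \<subseteq> K" "finite T" "K \<subseteq> (\<Union>x\<in>T. {a x<..<b x})"
    using compactE_image[OF K(1), of K "\<lambda>x. {a x<..<b x}"] by auto
  let ?W = "\<Union>x\<in>T. \<C> \<inter> {a x<..<b x}"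
  show ?thesis
  proof
    show "clopen_in_C ?W"
      using T ab by (intro clopen_in_C_UN clopen_in_C_interval) auto
    show "K \<subseteq> ?W"
      using T(3) K(2) by blast
    show "?W \<subseteq> U"
      using T(1) ab by blast
  qed
qed

lemma clopen_labelling:
  assumes "finite Ws" "\<And>W i. (W, i) \<in> Ws \<Longrightarrow> clopen_in_C W"
  shows "\<exists>G::real \<Rightarrow> 'i. (\<forall>S. clopen_in_C {x \<in> \<C>. G x \<in> S}) \<and>
           (\<forall>x\<in>\<C>. x \<in> \<Union>(fst ` Ws) \<longrightarrow> (\<exists>W. (W, G x) \<in> Ws \<and> x \<in> W))"
  using assms
proof (induction Ws rule: finite_induct)
  case empty
  have "clopen_in_C {x \<in> \<C>. (undefined::'i) \<in> S}" for S
    by (cases "undefined \<in> S") simp_all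
  then show ?case
    by (intro exI[of _ "\<lambda>_. undefined"]) simp
next
  case (insert p Ws)
  obtain W i where p: "p = (W, i)" by fastforce
  obtain G' :: "real \<Rightarrow> 'i" where G': "\<forall>S. clopen_in_C {x \<in> \<C>. G' x \<in> S}"
    "\<forall>x\<in>\<C>. x \<in> \<Union>(fst ` Ws) \<longrightarrow> (\<exists>W. (W, G' x) \<in> Ws \<and> x \<in> W)"
    using insert by auto
  have W: "clopen_in_C W"
    using insert.prems p by auto
  define G where "G x = (if x \<in> W then i else G' x)" for x
  have "{x \<in> \<C>. G x \<in> S} = (W \<inter> (if i \<in> S then \<C> else {})) \<union> ({x \<in> \<C>. G' x \<in> S} - W)" for S
    using clopen_in_C_subset[OF W] by (auto simp: G_def)
  then have "clopen_in_C {x \<in> \<C>. G x \<in> S}" for S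
    using W G'(1) by (auto intro!: clopen_in_C_Un clopen_in_C_Int clopen_in_C_Diff)
  moreover have "\<forall>x\<in>\<C>. x \<in> \<Union>(fst ` insert p Ws) \<longrightarrow> (\<exists>W'. (W', G x) \<in> insert p Ws \<and> x \<in> W')"
    using G'(2) by (auto simp: G_def p)
  ultimately show ?case by blast
qed

lemma clopen_refinement:
  assumes V: "\<And>i. i \<in> I \<Longrightarrow> open (V i)" "\<C> \<subseteq> (\<Union>i\<in>I. V i)"
  obtains Ws where "finite Ws" "\<And>W i. (W, i) \<in> Ws \<Longrightarrow> clopen_in_C W \<and> i \<in> I \<and> W \<subseteq> V i"
    "\<C> \<subseteq> \<Union>(fst ` Ws)"
proof -
  have "\<exists>W i N. i \<in> I \<and> clopen_in_C W \<and> W \<subseteq> V i \<and> open N \<and> W = \<C> \<inter> N \<and> x \<in> W"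
    if x: "x \<in> \<C>" for x
  proof -
    obtain i where i: "i \<in> I" "x \<in> V i"
      using V(2) x by blast
    obtain W where W: "clopen_in_C W" "{x} \<subseteq> W" "W \<subseteq> V i"
      using clopen_between_compact_open[of "{x}" "V i"] x i V(1) by auto
    obtain N where "open N" "W = \<C> \<inter> N"
      using clopen_in_C_open_trace[OF W(1)] by blast
    then show ?thesis
      using i W by blast
  qed
  then obtain W i N where WiN: "\<And>x. x \<in> \<C> \<Longrightarrow> i x \<in> I \<and> clopen_in_C (W x) \<and> W x \<subseteq> V (i x) \<and>
      open (N x) \<and> W x = \<C> \<inter> N x \<and> x \<in> W x"
    by metis
  have "\<C> \<subseteq> (\<Union>x\<in>\<C>. N x)"
    using WiN by blast
  then obtain T where T: "T \<subseteq> \<C>" "finite T" "\<C> \<subseteq> (\<Union>x\<in>T. N x)"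
    using compactE_image[OF compact_cantor_set, of \<C> N] WiN by auto
  show ?thesis
  proof
    show "finite ((\<lambda>x. (W x, i x)) ` T)"
      using T(2) by simp
    show "clopen_in_C W' \<and> j \<in> I \<and> W' \<subseteq> V j" if "(W', j) \<in> (\<lambda>x. (W x, i x)) ` T" for W' j
      using that T(1) WiN by auto
    show "\<C> \<subseteq> \<Union>(fst ` (\<lambda>x. (W x, i x)) ` T)"
    proof
      fix y assume y: "y \<in> \<C>"
      then obtain x where x: "x \<in> T" "y \<in> N x"
        using T(3) by blast
      then have "y \<in> W x"
        using T(1) WiN y by blast
      then show "y \<in> \<Union>(fst ` (\<lambda>x. (W x, i x)) ` T)"
        using x(1) by auto
    qed
  qed
qed

lemma clopen_partition_subordinate:
  assumes V: "\<And>i. i \<in> I \<Longrightarrow> open (V i)" "\<C> \<subseteq> (\<Union>i\<in>I. V i)"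
  obtains G :: "real \<Rightarrow> 'i" where "\<And>S. clopen_in_C {x \<in> \<C>. G x \<in> S}"
    "\<And>x. x \<in> \<C> \<Longrightarrow> G x \<in> I \<and> x \<in> V (G x)"
proof -
  obtain Ws where Ws: "finite Ws" "\<And>W i. (W, i) \<in> Ws \<Longrightarrow> clopen_in_C W \<and> i \<in> I \<and> W \<subseteq> V i"
    "\<C> \<subseteq> \<Union>(fst ` Ws)"
    using clopen_refinement[OF V] by blast
  then have "\<exists>G::real \<Rightarrow> 'i. (\<forall>S. clopen_in_C {x \<in> \<C>. G x \<in> S}) \<and>
      (\<forall>y\<in>\<C>. y \<in> \<Union>(fst ` Ws) \<longrightarrow> (\<exists>W. (W, G y) \<in> Ws \<and> y \<in> W))"
    by (intro clopen_labelling) auto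
  then obtain G :: "real \<Rightarrow> 'i" where G: "\<forall>S. clopen_in_C {x \<in> \<C>. G x \<in> S}"
    "\<forall>y\<in>\<C>. y \<in> \<Union>(fst ` Ws) \<longrightarrow> (\<exists>W. (W, G y) \<in> Ws \<and> y \<in> W)"
    by (elim exE conjE)
  show ?thesis
  proof
    show "clopen_in_C {x \<in> \<C>. G x \<in> S}" for S
      using G(1) by blast
    fix y assume y: "y \<in> \<C>"
    then obtain W where "(W, G y) \<in> Ws" "y \<in> W"
      using G(2) Ws(3) by blast
    then show "G y \<in> I \<and> y \<in> V (G y)"
      using Ws(2) by blast
  qed
qed

lemma continuous_on_clopen_fibres:
  fixes G :: "real \<Rightarrow> 'a::topological_space"
  assumes "\<And>S. clopen_in_C {x \<in> \<C>. G x \<in> S}" shows "continuous_on \<C> G"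
  unfolding continuous_on_open_invariant
proof (intro allI impI)
  fix B :: "'a set" assume "open B"
  obtain A where "open A" "{x \<in> \<C>. G x \<in> B} = \<C> \<inter> A"
    using clopen_in_C_open_trace assms by blast
  then show "\<exists>A. open A \<and> A \<inter> \<C> = G -` B \<inter> \<C>"
    by (intro exI[of _ A]) auto
qed

lemma clopen_partition_between:
  assumes I: "finite I" and B: "\<And>i. i \<in> I \<Longrightarrow> B i \<subseteq> \<C>" "\<C> \<subseteq> (\<Union>i\<in>I. B i)"
    "\<And>i j. i \<in> I \<Longrightarrow> j \<in> I \<Longrightarrow> i \<noteq> j \<Longrightarrow> B i \<inter> B j = {}"
    and L: "\<And>i. i \<in> I \<Longrightarrow> compact (L i)" "\<And>i. i \<in> I \<Longrightarrow> L i \<subseteq> B i"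
    and U: "\<And>i. i \<in> I \<Longrightarrow> open (U i)" "\<And>i. i \<in> I \<Longrightarrow> B i \<subseteq> U i"
  obtains G :: "real \<Rightarrow> 'i" where "\<And>S. clopen_in_C {x \<in> \<C>. G x \<in> S}" "\<And>x. x \<in> \<C> \<Longrightarrow> G x \<in> I"
    "\<And>i. i \<in> I \<Longrightarrow> L i \<subseteq> {x \<in> \<C>. G x = i}" "\<And>i. i \<in> I \<Longrightarrow> {x \<in> \<C>. G x = i} \<subseteq> U i"
proof -
  define V where "V i = U i - (\<Union>j\<in>I - {i}. L j)" for i
  have "open (V i)" if "i \<in> I" for i
    unfolding V_def using I L(1) U(1)[OF that] by (intro open_Diff closed_UN compact_imp_closed) auto
  moreover have "\<C> \<subseteq> (\<Union>i\<in>I. V i)"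
  proof
    fix x assume "x \<in> \<C>"
    then obtain i where i: "i \<in> I" "x \<in> B i"
      using B(2) by blast
    have "x \<notin> L j" if j: "j \<in> I - {i}" for j
    proof
      assume "x \<in> L j"
      then have "x \<in> B i \<inter> B j"
        using L(2)[of j] i(2) j by blast
      then show False
        using B(3)[of i j] i(1) j by blast
    qed
    moreover have "x \<in> U i"
      using U(2)[OF i(1)] i(2) by blast
    ultimately have "x \<in> V i"
      unfolding V_def by blast
    then show "x \<in> (\<Union>i\<in>I. V i)"
      using i(1) by blast
  qed
  ultimately obtain G :: "real \<Rightarrow> 'i" where G: "\<And>S. clopen_in_C {x \<in> \<C>. G x \<in> S}"
    "\<And>x. x \<in> \<C> \<Longrightarrow> G x \<in> I \<and> x \<in> V (G x)"
    using clopen_partition_subordinate[of I V] by blast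
  show ?thesis
  proof
    show "clopen_in_C {x \<in> \<C>. G x \<in> S}" "x \<in> \<C> \<Longrightarrow> G x \<in> I" for S x
      using G by auto
    show "L i \<subseteq> {x \<in> \<C>. G x = i}" if "i \<in> I" for i
    proof
      fix x assume x: "x \<in> L i"
      then have "x \<in> \<C>"
        using L(2) B(1) that by blast
      moreover have "G x = i"
        using G(2)[OF \<open>x \<in> \<C>\<close>] x that unfolding V_def by blast
      ultimately show "x \<in> {x \<in> \<C>. G x = i}" by simp
    qed
    show "{x \<in> \<C>. G x = i} \<subseteq> U i" for i
      using G(2) unfolding V_def by blast
  qed
qed

section \<open>Souslin sets\<close>

definition seq_prefix :: "(nat \<Rightarrow> nat) \<Rightarrow> nat \<Rightarrow> nat list" where
  "seq_prefix x n = map x [0..<n]"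

lemma seq_prefix_0 [simp]: "seq_prefix x 0 = []"
  by (simp add: seq_prefix_def)

lemma length_seq_prefix [simp]: "length (seq_prefix x n) = n"
  by (simp add: seq_prefix_def)

lemma take_seq_prefix: "j \<le> n \<Longrightarrow> take j (seq_prefix x n) = seq_prefix x j"
  by (simp add: seq_prefix_def take_map)

lemma seq_prefix_Suc: "seq_prefix x (Suc n) = seq_prefix x n @ [x n]"
  by (simp add: seq_prefix_def)

lemma seq_prefix_Suc_Cons: "seq_prefix x (Suc n) = x 0 # seq_prefix (\<lambda>i. x (Suc i)) n"
  unfolding seq_prefix_def by (rule map_upt_Suc)

definition souslin_set :: "'a::topological_space set \<Rightarrow> bool" where
  "souslin_set A \<longleftrightarrow> (\<exists>F. (\<forall>s. closed (F s)) \<and> A = {y. \<exists>x. \<forall>n. y \<in> F (seq_prefix x n)})"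

lemma souslin_set_closed: "closed A \<Longrightarrow> souslin_set A"
  unfolding souslin_set_def by (intro exI[of _ "\<lambda>s. A"]) simp

lemma souslin_set_UN:
  assumes "\<And>k::nat. souslin_set (A k)" shows "souslin_set (\<Union>k. A k)"
proof -
  have "\<forall>k. \<exists>F. (\<forall>s. closed (F s)) \<and> A k = {y. \<exists>x. \<forall>n. y \<in> F (seq_prefix x n)}"
    using assms unfolding souslin_set_def by blast
  then obtain F where F: "\<And>k s. closed (F k s)" "\<And>k. A k = {y. \<exists>x. \<forall>n. y \<in> F k (seq_prefix x n)}"
    by metis
  define G where "G s = (case s of [] \<Rightarrow> UNIV | k # t \<Rightarrow> F k t)" for s
  have "closed (G s)" for s
    unfolding G_def using F(1) by (cases s) auto
  moreover have "y \<in> (\<Union>k. A k) \<longleftrightarrow> (\<exists>x. \<forall>n. y \<in> G (seq_prefix x n))" for y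
  proof
    assume "y \<in> (\<Union>k. A k)"
    then obtain k x where x: "\<And>n. y \<in> F k (seq_prefix x n)"
      using F(2) by blast
    define x' where "x' i = (case i of 0 \<Rightarrow> k | Suc j \<Rightarrow> x j)" for i
    have "seq_prefix x' (Suc n) = k # seq_prefix x n" for n
      unfolding seq_prefix_Suc_Cons by (simp add: x'_def)
    then have "y \<in> G (seq_prefix x' n)" for n
      using x by (cases n) (simp_all add: G_def)
    then show "\<exists>x. \<forall>n. y \<in> G (seq_prefix x n)" by blast
  next
    assume "\<exists>x. \<forall>n. y \<in> G (seq_prefix x n)"
    then obtain x where x: "\<And>n. y \<in> G (seq_prefix x n)" by blast
    have "y \<in> F (x 0) (seq_prefix (\<lambda>i. x (Suc i)) n)" for n
      using x[of "Suc n"] unfolding seq_prefix_Suc_Cons by (simp add: G_def)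
    then show "y \<in> (\<Union>k. A k)"
      using F(2) by blast
  qed
  ultimately show ?thesis
    unfolding souslin_set_def by blast
qed

lemma seq_prefix_decode:
  "(\<And>j. j < m \<Longrightarrow> prod_encode (k, j) < n) \<Longrightarrow>
    seq_prefix (\<lambda>j. seq_prefix x n ! prod_encode (k, j)) m = seq_prefix (\<lambda>j. x (prod_encode (k, j))) m"
  by (simp add: seq_prefix_def)

text \<open>Countably many Souslin schemes combined into one: a single index sequence \<open>x\<close> encodes the
  index sequences \<open>\<lambda>j. x (prod_encode (k, j))\<close> of all of them.\<close>

definition interleaved_scheme :: "(nat \<Rightarrow> nat list \<Rightarrow> 'a set) \<Rightarrow> nat list \<Rightarrow> 'a set" where
  "interleaved_scheme F s = {y. \<forall>k m. (\<forall>j<m. prod_encode (k, j) < length s) \<longrightarrow>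
     y \<in> F k (seq_prefix (\<lambda>j. s ! prod_encode (k, j)) m)}"

lemma closed_interleaved_scheme:
  assumes "\<And>k s. closed (F k s)" shows "closed (interleaved_scheme F s)"
proof -
  have eq: "interleaved_scheme F s = (\<Inter>k. \<Inter>m. if \<forall>j<m. prod_encode (k, j) < length s
      then F k (seq_prefix (\<lambda>j. s ! prod_encode (k, j)) m) else UNIV)"
    unfolding interleaved_scheme_def by auto
  show ?thesis
    unfolding eq using assms by (intro closed_INT) auto
qed

lemma interleaved_scheme_iff:
  "(\<forall>n. y \<in> interleaved_scheme F (seq_prefix x n)) \<longleftrightarrow>
     (\<forall>k m. y \<in> F k (seq_prefix (\<lambda>j. x (prod_encode (k, j))) m))"
proof
  assume F: "\<forall>n. y \<in> interleaved_scheme F (seq_prefix x n)"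
  show "\<forall>k m. y \<in> F k (seq_prefix (\<lambda>j. x (prod_encode (k, j))) m)"
  proof (intro allI)
    fix k m
    define n where "n = Suc (\<Sum>j<m. prod_encode (k, j))"
    have n: "prod_encode (k, j) < n" if "j < m" for j
    proof -
      have "prod_encode (k, j) \<le> (\<Sum>j<m. prod_encode (k, j))"
        using that by (intro member_le_sum) auto
      then show ?thesis
        unfolding n_def by simp
    qed
    then have "y \<in> F k (seq_prefix (\<lambda>j. seq_prefix x n ! prod_encode (k, j)) m)"
      using F unfolding interleaved_scheme_def by simp
    then show "y \<in> F k (seq_prefix (\<lambda>j. x (prod_encode (k, j))) m)"
      using seq_prefix_decode[OF n] by simp
  qed
next
  assume "\<forall>k m. y \<in> F k (seq_prefix (\<lambda>j. x (prod_encode (k, j))) m)"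
  then show "\<forall>n. y \<in> interleaved_scheme F (seq_prefix x n)"
    using seq_prefix_decode unfolding interleaved_scheme_def by simp
qed

lemma souslin_set_INT:
  assumes "\<And>k::nat. souslin_set (A k)" shows "souslin_set (\<Inter>k. A k)"
proof -
  have "\<forall>k. \<exists>F. (\<forall>s. closed (F s)) \<and> A k = {y. \<exists>x. \<forall>n. y \<in> F (seq_prefix x n)}"
    using assms unfolding souslin_set_def by blast
  then obtain F where F: "\<And>k s. closed (F k s)" "\<And>k. A k = {y. \<exists>x. \<forall>n. y \<in> F k (seq_prefix x n)}"
    by metis
  have "y \<in> (\<Inter>k. A k) \<longleftrightarrow> (\<exists>x. \<forall>n. y \<in> interleaved_scheme F (seq_prefix x n))" for y
  proof
    assume "y \<in> (\<Inter>k. A k)"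
    then have "\<forall>k. \<exists>x. \<forall>n. y \<in> F k (seq_prefix x n)"
      using F(2) by blast
    then obtain xs where xs: "\<And>k n. y \<in> F k (seq_prefix (xs k) n)"
      by metis
    define x where "x p = xs (fst (prod_decode p)) (snd (prod_decode p))" for p
    have "(\<lambda>j. x (prod_encode (k, j))) = xs k" for k
      by (auto simp: x_def)
    then have "\<forall>n. y \<in> interleaved_scheme F (seq_prefix x n)"
      unfolding interleaved_scheme_iff using xs by simp
    then show "\<exists>x. \<forall>n. y \<in> interleaved_scheme F (seq_prefix x n)"
      by (rule exI[of _ x])
  next
    assume "\<exists>x. \<forall>n. y \<in> interleaved_scheme F (seq_prefix x n)"
    then obtain x where "\<forall>n. y \<in> interleaved_scheme F (seq_prefix x n)"
      by blast
    then have "\<forall>k m. y \<in> F k (seq_prefix (\<lambda>j. x (prod_encode (k, j))) m)"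
      unfolding interleaved_scheme_iff .
    then show "y \<in> (\<Inter>k. A k)"
      using F(2) by blast
  qed
  then have "(\<Inter>k. A k) = {y. \<exists>x. \<forall>n. y \<in> interleaved_scheme F (seq_prefix x n)}"
    by blast
  then show ?thesis
    unfolding souslin_set_def using closed_interleaved_scheme[OF F(1)]
    by (intro exI[of _ "interleaved_scheme F"]) simp
qed

lemma souslin_set_open:
  fixes S :: "'a::metric_space set"
  assumes "open S" shows "souslin_set S"
proof -
  have "fsigma_in euclidean S"
    using assms open_openin by (blast intro: open_imp_fsigma_in metrizable_space_euclidean)
  then obtain C :: "nat \<Rightarrow> 'a set" where C: "\<forall>n. closedin euclidean (C n)" "(\<Union>n. C n) = S"
    unfolding fsigma_in_ascending by blast
  have "souslin_set (\<Union>n. C n)"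
    using C(1) closed_closedin by (blast intro: souslin_set_UN souslin_set_closed)
  then show ?thesis
    using C(2) by simp
qed

lemma souslin_set_borel:
  fixes A :: "'a::metric_space set"
  assumes "A \<in> sets borel" shows "souslin_set A"
proof -
  have "A \<in> sigma_sets UNIV {S. open S}"
    using assms sets_borel by blast
  then have "souslin_set A \<and> souslin_set (- A)"
  proof (induction rule: sigma_sets.induct)
    case (Union a)
    then have "souslin_set (\<Union>i. a i)" "souslin_set (\<Inter>i. - a i)"
      by (auto intro: souslin_set_UN souslin_set_INT)
    then show ?case by simp
  qed (auto intro: souslin_set_open souslin_set_closed simp: Compl_eq_Diff_UNIV[symmetric])
  then show ?thesis ..
qed

lemma souslin_fibres_of_measurable:
  assumes "F \<in> measurable (restrict_space borel \<C>) (count_space I)"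
  shows "\<exists>A. souslin_set A \<and> {x \<in> \<C>. F x \<in> S} = A \<inter> \<C>"
proof -
  have "F -` (S \<inter> I) \<inter> space (restrict_space borel \<C>) \<in> sets (restrict_space borel \<C>)"
    using assms by (rule measurable_sets) simp
  moreover have "F -` (S \<inter> I) \<inter> space (restrict_space borel \<C>) = {x \<in> \<C>. F x \<in> S}"
    using measurable_space[OF assms] by (auto simp: space_restrict_space)
  ultimately obtain B where "B \<in> sets borel" "{x \<in> \<C>. F x \<in> S} = \<C> \<inter> B"
    unfolding sets_restrict_space by auto
  then show ?thesis
    using souslin_set_borel by blast
qed

section \<open>Koenig's lemma and bounded Souslin schemes\<close>

lemma snoc_closed_has_branch:
  assumes "D []" "\<And>s. D s \<Longrightarrow> \<exists>k. D (s @ [k])"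
  shows "\<exists>x. \<forall>n. D (seq_prefix x n)"
proof -
  have "\<exists>f. \<forall>n. (D (f n) \<and> length (f n) = n) \<and> take n (f (Suc n)) = f n"
  proof (rule dependent_nat_choice)
    fix s n assume "D s \<and> length s = n"
    then show "\<exists>s'. (D s' \<and> length s' = Suc n) \<and> take n s' = s"
      using assms(2) by fastforce
  qed (use assms(1) in auto)
  then obtain f where f: "\<And>n. D (f n)" "\<And>n. length (f n) = n" "\<And>n. take n (f (Suc n)) = f n"
    by blast
  define x where "x i = f (Suc i) ! i" for i
  have "seq_prefix x n = f n" for n
  proof (induction n)
    case 0
    then show ?case using f(2)[of 0] by simp
  next
    case (Suc n)
    have "f (Suc n) = take n (f (Suc n)) @ [f (Suc n) ! n]"
      using f(2)[of "Suc n"] by (simp add: take_Suc_conv_app_nth[symmetric])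
    then show ?case
      using Suc f(3)[of n] by (simp add: seq_prefix_Suc x_def)
  qed
  then show ?thesis
    using f(1) by metis
qed

definition deep_node :: "(nat list \<Rightarrow> bool) \<Rightarrow> nat list \<Rightarrow> bool" where
  "deep_node T s \<longleftrightarrow> (\<forall>m\<ge>length s. \<exists>s'. length s' = m \<and> take (length s) s' = s \<and> T s')"

lemma deep_node_in_tree: "deep_node T s \<Longrightarrow> T s"
  unfolding deep_node_def by fastforce

lemma deep_node_snoc:
  assumes T_take: "\<And>s j. T s \<Longrightarrow> T (take j s)"
    and bounded: "\<And>s i. T s \<Longrightarrow> i < length s \<Longrightarrow> s ! i \<le> b i"
    and "deep_node T s"
  shows "\<exists>k. deep_node T (s @ [k])"
proof (rule ccontr)
  assume "\<nexists>k. deep_node T (s @ [k])"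
  then have "\<forall>k. \<exists>m\<ge>Suc (length s). \<forall>s'. length s' = m \<longrightarrow> take (Suc (length s)) s' = s @ [k] \<longrightarrow> \<not> T s'"
    unfolding deep_node_def by (auto; blast)
  then obtain lev where lev: "\<And>k. Suc (length s) \<le> lev k"
    "\<And>k s'. length s' = lev k \<Longrightarrow> take (Suc (length s)) s' = s @ [k] \<Longrightarrow> \<not> T s'"
    by metis
  \<comment> \<open>Pigeonhole: only the children \<open>s @ [k]\<close> with \<open>k \<le> b (length s)\<close> can lie in the tree.\<close>
  define M where "M = Max (lev ` {..b (length s)})"
  have lev_M: "lev k \<le> M" if "k \<le> b (length s)" for k
    unfolding M_def using that by (intro Max_ge) auto
  then have "Suc (length s) \<le> M"
    using lev(1)[of 0] by (meson le_trans zero_le)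
  then obtain s' where s': "length s' = M" "take (length s) s' = s" "T s'"
    using \<open>deep_node T s\<close> unfolding deep_node_def by (meson Suc_leD)
  define k where "k = s' ! length s"
  have "k \<le> b (length s)"
    using bounded[OF s'(3)] s'(1) \<open>Suc (length s) \<le> M\<close> unfolding k_def by simp
  then have lev_k: "lev k \<le> length s'"
    using lev_M s'(1) by simp
  have "take (Suc (length s)) (take (lev k) s') = s @ [k]"
    using lev(1)[of k] lev_k s' \<open>Suc (length s) \<le> M\<close>
    by (simp add: min_def take_Suc_conv_app_nth k_def)
  moreover have "length (take (lev k) s') = lev k" "T (take (lev k) s')"
    using lev_k T_take[OF s'(3)] by auto
  ultimately show False
    using lev(2) by blast
qed

lemma bounded_tree_has_branch:
  fixes Q :: "nat list \<Rightarrow> bool" and b :: "nat \<Rightarrow> nat"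
  assumes prefix_closed: "\<And>s j. Q s \<Longrightarrow> Q (take j s)"
    and levels: "\<And>m. \<exists>s. length s = m \<and> (\<forall>i<m. s ! i \<le> b i) \<and> Q s"
  shows "\<exists>x. \<forall>n. Q (seq_prefix x n)"
proof -
  define T where "T s \<longleftrightarrow> (\<forall>i<length s. s ! i \<le> b i) \<and> Q s" for s
  have "deep_node T []"
    unfolding deep_node_def
  proof (intro allI impI)
    fix m
    obtain s where "length s = m" "\<forall>i<m. s ! i \<le> b i" "Q s"
      using levels by blast
    then show "\<exists>s'. length s' = m \<and> take (length []) s' = [] \<and> T s'"
      unfolding T_def by auto
  qed
  moreover have "\<exists>k. deep_node T (s @ [k])" if "deep_node T s" for s
    using that prefix_closed by (intro deep_node_snoc[of T b]) (auto simp: T_def)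
  ultimately obtain x where "\<And>n. deep_node T (seq_prefix x n)"
    using snoc_closed_has_branch[of "deep_node T"] by blast
  then show ?thesis
    using deep_node_in_tree unfolding T_def by blast
qed

definition bounded_lists :: "(nat \<Rightarrow> nat) \<Rightarrow> nat \<Rightarrow> nat list set" where
  "bounded_lists b m = {s. length s = m \<and> (\<forall>i<m. s ! i \<le> b i)}"

lemma finite_bounded_lists: "finite (bounded_lists b m)"
proof (rule finite_subset)
  show "bounded_lists b m \<subseteq> {s. set s \<subseteq> {..(\<Sum>i<m. b i)} \<and> length s = m}"
  proof
    fix s assume s: "s \<in> bounded_lists b m"
    have "s ! i \<le> (\<Sum>i<m. b i)" if "i < m" for i
    proof -
      have "b i \<le> (\<Sum>i<m. b i)"
        using that by (intro member_le_sum) auto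
      then show ?thesis
        using s that unfolding bounded_lists_def by auto
    qed
    then show "s \<in> {s. set s \<subseteq> {..(\<Sum>i<m. b i)} \<and> length s = m}"
      using s unfolding bounded_lists_def by (auto simp: in_set_conv_nth)
  qed
qed (intro finite_lists_length_eq finite_atMost)

lemma take_bounded_lists: "s \<in> bounded_lists b (Suc m) \<Longrightarrow> take m s \<in> bounded_lists b m"
  unfolding bounded_lists_def by auto

lemma seq_prefix_bounded_lists: "(\<And>i. i < m \<Longrightarrow> x i \<le> b i) \<Longrightarrow> seq_prefix x m \<in> bounded_lists b m"
  unfolding bounded_lists_def seq_prefix_def by auto

definition souslin_bounded :: "(nat list \<Rightarrow> 'a set) \<Rightarrow> (nat \<Rightarrow> nat) \<Rightarrow> nat \<Rightarrow> 'a set" where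
  "souslin_bounded F b m = {y. \<exists>x. (\<forall>i<m. x i \<le> b i) \<and> (\<forall>n. y \<in> F (seq_prefix x n))}"

lemma souslin_bounded_0: "souslin_bounded F b 0 = {y. \<exists>x. \<forall>n. y \<in> F (seq_prefix x n)}"
  unfolding souslin_bounded_def by simp

lemma souslin_bounded_cong:
  "(\<And>i. i < m \<Longrightarrow> b i = b' i) \<Longrightarrow> souslin_bounded F b m = souslin_bounded F b' m"
  unfolding souslin_bounded_def by auto

lemma souslin_bounded_eq_UN:
  "souslin_bounded F b m = (\<Union>N. souslin_bounded F (b(m := N)) (Suc m))"
proof (intro equalityI subsetI)
  fix y assume "y \<in> souslin_bounded F b m"
  then obtain x where x: "\<forall>i<m. x i \<le> b i" "\<forall>n. y \<in> F (seq_prefix x n)"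
    unfolding souslin_bounded_def by blast
  then have "y \<in> souslin_bounded F (b(m := x m)) (Suc m)"
    unfolding souslin_bounded_def by (intro CollectI exI[of _ x]) (auto simp: less_Suc_eq)
  then show "y \<in> (\<Union>N. souslin_bounded F (b(m := N)) (Suc m))" by blast
next
  fix y assume "y \<in> (\<Union>N. souslin_bounded F (b(m := N)) (Suc m))"
  then obtain N x where x: "\<forall>i<Suc m. x i \<le> (b(m := N)) i" "\<forall>n. y \<in> F (seq_prefix x n)"
    unfolding souslin_bounded_def by blast
  then have "\<forall>i<m. x i \<le> b i"
    by (metis fun_upd_other less_Suc_eq less_irrefl)
  with x(2) show "y \<in> souslin_bounded F b m"
    unfolding souslin_bounded_def by blast
qed

lemma incseq_souslin_bounded: "incseq (\<lambda>N. souslin_bounded F (b(m := N)) (Suc m))"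
proof (intro monoI subsetI)
  fix N N' y assume "N \<le> N'" "y \<in> souslin_bounded F (b(m := N)) (Suc m)"
  then obtain x where x: "\<forall>i<Suc m. x i \<le> (b(m := N)) i" "\<forall>n. y \<in> F (seq_prefix x n)"
    unfolding souslin_bounded_def by blast
  have "\<forall>i<Suc m. x i \<le> (b(m := N')) i"
  proof (intro allI impI)
    fix i assume "i < Suc m"
    then show "x i \<le> (b(m := N')) i"
      using x(1) \<open>N \<le> N'\<close> by (cases "i = m") auto
  qed
  with x(2) show "y \<in> souslin_bounded F (b(m := N')) (Suc m)"
    unfolding souslin_bounded_def by blast
qed

lemma souslin_bounded_subset_UN: "souslin_bounded F b m \<subseteq> (\<Union>s\<in>bounded_lists b m. F s)"
  unfolding souslin_bounded_def using seq_prefix_bounded_lists by blast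

lemma decseq_bounded_levels:
  assumes "\<And>s j. F s \<subseteq> F (take j s)" shows "decseq (\<lambda>m. \<Union>s\<in>bounded_lists b m. F s)"
proof (rule decseq_SucI)
  show "(\<Union>s\<in>bounded_lists b (Suc m). F s) \<subseteq> (\<Union>s\<in>bounded_lists b m. F s)" for m
    using assms take_bounded_lists by blast
qed

lemma INT_bounded_levels_subset:
  assumes "\<And>s j. F s \<subseteq> F (take j s)"
  shows "(\<Inter>m. \<Union>s\<in>bounded_lists b m. F s) \<subseteq> {y. \<exists>x. \<forall>n. y \<in> F (seq_prefix x n)}"
proof
  fix y assume "y \<in> (\<Inter>m. \<Union>s\<in>bounded_lists b m. F s)"
  then have levels: "\<exists>s. length s = m \<and> (\<forall>i<m. s ! i \<le> b i) \<and> y \<in> F s" for m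
    unfolding bounded_lists_def by blast
  have "\<exists>x. \<forall>n. y \<in> F (seq_prefix x n)"
  proof (rule bounded_tree_has_branch[of "\<lambda>s. y \<in> F s" b])
    show "y \<in> F (take j s)" if "y \<in> F s" for s j
      using that assms by blast
  qed (rule levels)
  then show "y \<in> {y. \<exists>x. \<forall>n. y \<in> F (seq_prefix x n)}"
    by (simp only: mem_Collect_eq)
qed

lemma souslin_set_compact_scheme:
  assumes A: "souslin_set A" and S: "compact S"
  obtains F where "\<And>s. compact (F s)" "\<And>s j. F s \<subseteq> F (take j s)"
    "A \<inter> S = {y. \<exists>x. \<forall>n. y \<in> F (seq_prefix x n)}"
proof -
  obtain G where G: "\<And>s. closed (G s)" "A = {y. \<exists>x. \<forall>n. y \<in> G (seq_prefix x n)}"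
    using A unfolding souslin_set_def by blast
  define F where "F s = S \<inter> (\<Inter>j\<le>length s. G (take j s))" for s
  show ?thesis
  proof
    show "compact (F s)" for s
      unfolding F_def using S G(1) by (intro compact_Int_closed closed_INT) auto
    show "F s \<subseteq> F (take j s)" for s j
      unfolding F_def by (auto simp: min_def)
    show "A \<inter> S = {y. \<exists>x. \<forall>n. y \<in> F (seq_prefix x n)}"
    proof (intro equalityI subsetI)
      fix y assume "y \<in> A \<inter> S"
      then obtain x where "\<And>n. y \<in> G (seq_prefix x n)" "y \<in> S"
        using G(2) by blast
      then have "y \<in> F (seq_prefix x n)" for n
        unfolding F_def by (auto simp: take_seq_prefix)
      then show "y \<in> {y. \<exists>x. \<forall>n. y \<in> F (seq_prefix x n)}" by blast
    next
      fix y assume "y \<in> {y. \<exists>x. \<forall>n. y \<in> F (seq_prefix x n)}"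
      then obtain x where x: "\<And>n. y \<in> F (seq_prefix x n)" by blast
      have "y \<in> G (seq_prefix x n)" for n
        using x[of n] unfolding F_def by (auto dest: bspec[of _ _ n])
      moreover have "y \<in> S"
        using x[of 0] unfolding F_def by blast
      ultimately show "y \<in> A \<inter> S"
        using G(2) by blast
    qed
  qed
qed

section \<open>The distance between setfunctions\<close>

lemma edist_nonneg: "0 \<le> edist k u v"
  unfolding edist_def by (simp add: sum_nonneg)

text \<open>The factor \<open>(3/2)^k\<close> (rather than \<open>sqrt (2^k)\<close>) makes the series defining
  \<^const>\<open>setfun_dist\<close> geometric with ratio \<open>3/4\<close>.\<close>

lemma edist_le:
  assumes "\<And>A. A \<subseteq> {1..k} \<Longrightarrow> \<bar>u A - v A\<bar> \<le> c" "0 \<le> c"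
  shows "edist k u v \<le> c * (3/2)^k"
proof -
  have "(\<Sum>A\<in>Pow {1..k}. (u A - v A)\<^sup>2) \<le> (\<Sum>A\<in>Pow {1..k}. c\<^sup>2)"
    using assms by (intro sum_mono) (auto simp flip: abs_le_square_iff)
  also have "\<dots> = 2^k * c\<^sup>2"
    by (simp add: card_Pow)
  also have "\<dots> \<le> (9/4)^k * c\<^sup>2"
    by (intro mult_right_mono power_mono) auto
  also have "\<dots> = (c * (3/2)^k)\<^sup>2"
    by (simp add: power_mult_distrib power2_eq_square flip: power_mult_distrib)
  finally show ?thesis
    unfolding edist_def using assms(2) by (simp add: real_le_lsqrt)
qed

lemma hausd_le:
  assumes ne: "S \<noteq> {}" "T \<noteq> {}"
    and ST: "\<And>x. x \<in> S \<Longrightarrow> \<exists>y\<in>T. edist k x y \<le> B"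
    and TS: "\<And>y. y \<in> T \<Longrightarrow> \<exists>x\<in>S. edist k x y \<le> B"
  shows "0 \<le> hausd k S T" "hausd k S T \<le> B"
proof -
  have bdd: "bdd_below ((\<lambda>y. edist k x y) ` T)" "bdd_below ((\<lambda>x. edist k x y) ` S)" for x y
    using edist_nonneg by (auto intro!: bdd_belowI[of _ 0])
  have inf_ST: "(INF y\<in>T. edist k x y) \<le> B" if x: "x \<in> S" for x
  proof -
    obtain y where "y \<in> T" "edist k x y \<le> B"
      using ST[OF x] by blast
    then show ?thesis
      using cINF_lower[OF bdd(1)[of x], of y] by linarith
  qed
  have inf_TS: "(INF x\<in>S. edist k x y) \<le> B" if y: "y \<in> T" for y
  proof -
    obtain x where "x \<in> S" "edist k x y \<le> B"
      using TS[OF y] by blast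
    then show ?thesis
      using cINF_lower[OF bdd(2)[of y], of x] by linarith
  qed
  show "hausd k S T \<le> B"
    unfolding hausd_def using ne inf_ST inf_TS by (simp add: cSUP_least)
  obtain x where x: "x \<in> S"
    using ne(1) by blast
  have "0 \<le> (INF y\<in>T. edist k x y)"
    using ne(2) edist_nonneg by (intro cINF_greatest) auto
  also have "\<dots> \<le> (SUP x\<in>S. INF y\<in>T. edist k x y)"
    using x inf_ST by (intro cSUP_upper bdd_aboveI2) auto
  finally show "0 \<le> hausd k S T"
    unfolding hausd_def by simp
qed

lemma quotients_nonempty: "1 \<le> k \<Longrightarrow> quotients q \<phi> k \<noteq> {}"
  unfolding quotients_def by (auto intro!: exI[of _ "\<lambda>_. 1"])

lemma quotients_close:
  assumes \<phi>: "\<And>A. \<bar>\<phi>1 A - \<phi>2 A\<bar> \<le> c" and c: "0 \<le> c" and u: "u \<in> quotients q \<phi>1 k"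
  shows "\<exists>v\<in>quotients q \<phi>2 k. edist k u v \<le> c * (3/2)^k \<and> edist k v u \<le> c * (3/2)^k"
proof -
  obtain g where g: "g ` {1..q} \<subseteq> {1..k}"
    "u = (\<lambda>A. if A \<subseteq> {1..k} then \<phi>1 {i \<in> {1..q}. g i \<in> A} else 0)"
    using u unfolding quotients_def by blast
  define v where "v = (\<lambda>A. if A \<subseteq> {1..k} then \<phi>2 {i \<in> {1..q}. g i \<in> A} else 0)"
  have "v \<in> quotients q \<phi>2 k"
    unfolding quotients_def v_def using g(1) by blast
  moreover have "edist k u v \<le> c * (3/2)^k" "edist k v u \<le> c * (3/2)^k"
    using \<phi> c by (auto intro!: edist_le simp: g(2) v_def abs_minus_commute)
  ultimately show ?thesis by blast
qed

lemma hausd_quotients_le: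
  assumes \<phi>: "\<And>A. \<bar>\<phi>1 A - \<phi>2 A\<bar> \<le> c" and c: "0 \<le> c" and k: "1 \<le> k"
  shows "0 \<le> hausd k (quotients q \<phi>1 k) (quotients q \<phi>2 k)"
    and "hausd k (quotients q \<phi>1 k) (quotients q \<phi>2 k) \<le> c * (3/2)^k"
proof -
  have \<phi>': "\<bar>\<phi>2 A - \<phi>1 A\<bar> \<le> c" for A
    using \<phi>[of A] by (simp add: abs_minus_commute)
  have ST: "\<exists>y\<in>quotients q \<phi>2 k. edist k x y \<le> c * (3/2)^k" if "x \<in> quotients q \<phi>1 k" for x
    using quotients_close[OF \<phi> c that] by blast
  have TS: "\<exists>x\<in>quotients q \<phi>1 k. edist k x y \<le> c * (3/2)^k" if "y \<in> quotients q \<phi>2 k" for y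
    using quotients_close[OF \<phi>' c that] by blast
  show "0 \<le> hausd k (quotients q \<phi>1 k) (quotients q \<phi>2 k)"
    and "hausd k (quotients q \<phi>1 k) (quotients q \<phi>2 k) \<le> c * (3/2)^k"
    using hausd_le[OF quotients_nonempty[OF k] quotients_nonempty[OF k] ST TS] by blast+
qed

lemma setfun_dist_le:
  assumes \<phi>: "\<And>A. \<bar>\<phi>1 A - \<phi>2 A\<bar> \<le> c" and c: "0 \<le> c"
  shows "setfun_dist q \<phi>1 \<phi>2 \<le> 3 * c"
proof -
  define h where "h k = hausd (Suc k) (quotients q \<phi>1 (Suc k)) (quotients q \<phi>2 (Suc k))" for k
  have h: "0 \<le> h k" "h k \<le> c * (3/2)^Suc k" for k
    unfolding h_def using hausd_quotients_le[OF \<phi> c, of "Suc k"] by auto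
  define g where "g k = c * (3/4) * (3/4::real)^k" for k
  have g: "g sums (c * (3/4) * (1 / (1 - 3/4)))"
    unfolding g_def by (intro sums_mult geometric_sums) simp
  have hg: "(1/2)^Suc k * h k \<le> g k" for k
  proof -
    have "(1/2)^Suc k * h k \<le> (1/2)^Suc k * (c * (3/2)^Suc k)"
      using h by (intro mult_left_mono) auto
    also have "\<dots> = g k"
      unfolding g_def by (simp add: power_mult_distrib[symmetric] field_simps)
    finally show ?thesis .
  qed
  have "summable (\<lambda>k. (1/2)^Suc k * h k)"
    using h hg by (intro summable_comparison_test'[OF sums_summable[OF g]]) auto
  then have "(\<lambda>k. (1/2)^Suc k * h k) sums setfun_dist q \<phi>1 \<phi>2"
    unfolding setfun_dist_def h_def by (rule summable_sums)
  from sums_le[OF hg this g] show ?thesis by simp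
qed

section \<open>The outer capacity generated by a submodular function on clopen sets\<close>

locale clopen_capacity =
  fixes P :: "real set \<Rightarrow> real"
  assumes increasing: "increasing_on {H. clopen_in_C H} P"
    and submodular: "submodular_on {H. clopen_in_C H} P"
    and P_empty: "P {} = 0"
begin

definition cap_open :: "real set \<Rightarrow> real" where
  "cap_open U = Sup {P H | H. clopen_in_C H \<and> H \<subseteq> U}"

text \<open>\<open>cap\<close> is the outer capacity generated by \<open>P\<close>; it agrees with \<^const>\<open>psiK\<close> on compact
  subsets of the Cantor set (\<open>cap_compact_eq_psiK\<close>) and with \<^const>\<open>psiB\<close> on its Souslin
  subsets (\<open>psiB_eq_cap\<close>).\<close>

definition cap :: "real set \<Rightarrow> real" where
  "cap A = Inf {cap_open U | U. open U \<and> A \<subseteq> U}"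

lemma P_mono: "clopen_in_C A \<Longrightarrow> clopen_in_C B \<Longrightarrow> A \<subseteq> B \<Longrightarrow> P A \<le> P B"
  using increasing unfolding increasing_on_def by auto

lemma P_nonneg: "clopen_in_C H \<Longrightarrow> 0 \<le> P H"
  using P_mono[of "{}" H] P_empty by simp

lemma P_le_cantor_set: "clopen_in_C H \<Longrightarrow> P H \<le> P \<C>"
  using P_mono[of H \<C>] clopen_in_C_subset by simp

lemma P_submodular:
  assumes "clopen_in_C A" "clopen_in_C B" shows "P (A \<union> B) + P (A \<inter> B) \<le> P A + P B"
proof -
  have "P (A \<inter> B) + P (A \<union> B) \<le> P A + P B"
    using submodular assms unfolding submodular_on_def by blast
  then show ?thesis by linarith
qed

lemma cap_open_upper: "clopen_in_C H \<Longrightarrow> H \<subseteq> U \<Longrightarrow> P H \<le> cap_open U"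
  unfolding cap_open_def
  by (rule cSup_upper) (auto intro!: bdd_aboveI[of _ "P \<C>"] P_le_cantor_set)

lemma cap_open_least:
  assumes "\<And>H. clopen_in_C H \<Longrightarrow> H \<subseteq> U \<Longrightarrow> P H \<le> t" shows "cap_open U \<le> t"
  unfolding cap_open_def
proof (rule cSup_least)
  show "{P H | H. clopen_in_C H \<and> H \<subseteq> U} \<noteq> {}"
    using clopen_in_C_empty by blast
qed (use assms in auto)

lemma cap_open_nonneg: "0 \<le> cap_open U"
  using cap_open_upper[of "{}" U] P_empty by simp

lemma cap_open_clopen: "clopen_in_C H \<Longrightarrow> H = \<C> \<inter> U \<Longrightarrow> cap_open U = P H"
  by (intro antisym cap_open_least cap_open_upper P_mono) (auto dest: clopen_in_C_subset)

lemma cap_lower: "open U \<Longrightarrow> A \<subseteq> U \<Longrightarrow> cap A \<le> cap_open U"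
  unfolding cap_def by (rule cInf_lower) (auto intro!: bdd_belowI[of _ 0] cap_open_nonneg)

lemma cap_greatest:
  assumes "\<And>U. open U \<Longrightarrow> A \<subseteq> U \<Longrightarrow> t \<le> cap_open U" shows "t \<le> cap A"
  unfolding cap_def
proof (rule cInf_greatest)
  show "{cap_open U | U. open U \<and> A \<subseteq> U} \<noteq> {}"
    using open_UNIV by blast
qed (use assms in auto)

lemma cap_mono: "A \<subseteq> B \<Longrightarrow> cap A \<le> cap B"
  by (intro cap_greatest) (auto intro: cap_lower)

lemma cap_approx:
  assumes "e > 0" obtains U where "open U" "A \<subseteq> U" "cap_open U < cap A + e"
proof -
  let ?S = "{cap_open U | U. open U \<and> A \<subseteq> U}"
  have "?S \<noteq> {}"
    using open_UNIV by blast
  moreover have "Inf ?S < cap A + e"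
    using assms by (simp add: cap_def)
  ultimately have "\<exists>y\<in>?S. y < cap A + e"
    by (rule cInf_lessD)
  then show ?thesis
    using that by blast
qed

lemma cap_compact_eq_psiK:
  assumes K: "compact K" "K \<subseteq> \<C>" shows "cap K = psiK P K"
proof (rule antisym)
  show "cap K \<le> psiK P K"
    unfolding psiK_def
  proof (rule cInf_greatest)
    show "{P H | H. clopen_in_C H \<and> K \<subseteq> H} \<noteq> {}"
      using K(2) clopen_in_C_cantor_set by blast
  next
    fix x assume "x \<in> {P H | H. clopen_in_C H \<and> K \<subseteq> H}"
    then obtain H where H: "x = P H" "clopen_in_C H" "K \<subseteq> H" by blast
    then obtain U where U: "open U" "H = \<C> \<inter> U" using clopen_in_C_open_trace by blast
    show "cap K \<le> x"
      using cap_lower[of U K] cap_open_clopen[OF H(2) U(2)] U H by auto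
  qed
  show "psiK P K \<le> cap K"
  proof (rule cap_greatest)
    fix U assume U: "open U" "K \<subseteq> U"
    obtain W where W: "clopen_in_C W" "K \<subseteq> W" "W \<subseteq> U"
      using clopen_between_compact_open[OF K U] .
    have "psiK P K \<le> P W"
      unfolding psiK_def using W by (intro cInf_lower) (auto intro!: bdd_belowI[of _ 0] P_nonneg)
    also have "\<dots> \<le> cap_open U"
      using W by (intro cap_open_upper)
    finally show "psiK P K \<le> cap_open U" .
  qed
qed

lemma clopen_split:
  assumes H: "clopen_in_C H" "H \<subseteq> U \<union> V" and UV: "open U" "open V"
  obtains H1 H2 where "clopen_in_C H1" "clopen_in_C H2" "H1 \<subseteq> U" "H2 \<subseteq> V"
    "H1 \<union> H2 = H" "H1 \<inter> H2 = {}"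
proof -
  have "compact (H - V)"
    using compact_clopen_in_C[OF H(1)] UV(2) by (simp add: compact_diff)
  moreover have "H - V \<subseteq> \<C>" "H - V \<subseteq> U"
    using clopen_in_C_subset[OF H(1)] H(2) by auto
  ultimately obtain W where W: "clopen_in_C W" "H - V \<subseteq> W" "W \<subseteq> U"
    using clopen_between_compact_open UV(1) by metis
  show ?thesis
    using W H by (intro that[of "H \<inter> W" "H - W"]) (auto intro: clopen_in_C_Int clopen_in_C_Diff)
qed

lemma cap_open_strongly_subadditive:
  assumes UV: "open U" "open V"
  shows "cap_open (U \<union> V) + cap_open (U \<inter> V) \<le> cap_open U + cap_open V"
proof -
  have sum_le: "P H + P H' \<le> cap_open U + cap_open V"
    if H: "clopen_in_C H" "H \<subseteq> U \<union> V" and H': "clopen_in_C H'" "H' \<subseteq> U \<inter> V" for H H'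
  proof -
    obtain H1 H2 where S: "clopen_in_C H1" "clopen_in_C H2" "H1 \<subseteq> U" "H2 \<subseteq> V"
      "H1 \<union> H2 = H" "H1 \<inter> H2 = {}"
      using clopen_split[OF H UV] .
    let ?X = "H1 \<union> H'" and ?Y = "H2 \<union> H'"
    have X: "clopen_in_C ?X" "clopen_in_C ?Y"
      using S H' by (auto intro: clopen_in_C_Un)
    have "?X \<union> ?Y = H \<union> H'" "?X \<inter> ?Y = H'"
      using S by auto
    moreover have "P H \<le> P (H \<union> H')"
      using S H' by (intro P_mono) (auto intro: clopen_in_C_Un)
    ultimately have "P H + P H' \<le> P (?X \<union> ?Y) + P (?X \<inter> ?Y)"
      by simp
    also have "\<dots> \<le> P ?X + P ?Y"
      using P_submodular[OF X] .
    also have "\<dots> \<le> cap_open U + cap_open V"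
      using S H' X by (intro add_mono cap_open_upper) auto
    finally show ?thesis .
  qed
  have "cap_open (U \<union> V) \<le> cap_open U + cap_open V - cap_open (U \<inter> V)"
  proof (rule cap_open_least)
    fix H assume H: "clopen_in_C H" "H \<subseteq> U \<union> V"
    have "cap_open (U \<inter> V) \<le> cap_open U + cap_open V - P H"
      using sum_le[OF H] by (intro cap_open_least) (simp add: algebra_simps)
    then show "P H \<le> cap_open U + cap_open V - cap_open (U \<inter> V)"
      by linarith
  qed
  then show ?thesis by linarith
qed

lemma cap_strongly_subadditive: "cap (A \<union> B) + cap (A \<inter> B) \<le> cap A + cap B"
proof -
  have "cap (A \<union> B) + cap (A \<inter> B) - cap B \<le> cap A"
  proof (rule cap_greatest)
    fix U assume U: "open U" "A \<subseteq> U"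
    have "cap (A \<union> B) + cap (A \<inter> B) - cap_open U \<le> cap B"
    proof (rule cap_greatest)
      fix V assume V: "open V" "B \<subseteq> V"
      have "cap (A \<union> B) \<le> cap_open (U \<union> V)"
        using U V by (intro cap_lower) auto
      moreover have "cap (A \<inter> B) \<le> cap_open (U \<inter> V)"
        using U V by (intro cap_lower) auto
      ultimately
      show "cap (A \<union> B) + cap (A \<inter> B) - cap_open U \<le> cap_open V"
        using cap_open_strongly_subadditive[OF U(1) V(1)] by linarith
    qed
    then show "cap (A \<union> B) + cap (A \<inter> B) - cap B \<le> cap_open U" by linarith
  qed
  then show ?thesis by linarith
qed

lemma cap_Un_diff_le:
  assumes "X \<subseteq> X'" "Y \<subseteq> Y'"
  shows "cap (X' \<union> Y') - cap (X \<union> Y) \<le> (cap X' - cap X) + (cap Y' - cap Y)"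
proof -
  have "cap (X' \<union> Y') + cap X \<le> cap X' + cap (X \<union> Y')"
    using cap_strongly_subadditive[of X' "X \<union> Y'"] cap_mono[of X "X' \<inter> (X \<union> Y')"] assms
    by (simp add: Un_absorb1 Un_left_absorb Un_assoc[symmetric] sup.absorb1)
  moreover have "cap (X \<union> Y') + cap Y \<le> cap Y' + cap (X \<union> Y)"
    using cap_strongly_subadditive[of Y' "X \<union> Y"] cap_mono[of Y "Y' \<inter> (X \<union> Y)"] assms
    by (simp add: Un_commute Un_left_commute sup.absorb2)
  ultimately show ?thesis by linarith
qed

lemma cap_UN_diff_le:
  assumes "finite S" "\<And>i. i \<in> S \<Longrightarrow> A i \<subseteq> A' i"
  shows "cap (\<Union>i\<in>S. A' i) - cap (\<Union>i\<in>S. A i) \<le> (\<Sum>i\<in>S. cap (A' i) - cap (A i))"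
  using assms
proof (induction S rule: finite_induct)
  case (insert j S)
  have "cap (A' j \<union> (\<Union>i\<in>S. A' i)) - cap (A j \<union> (\<Union>i\<in>S. A i))
      \<le> (cap (A' j) - cap (A j)) + (cap (\<Union>i\<in>S. A' i) - cap (\<Union>i\<in>S. A i))"
    using insert.prems by (intro cap_Un_diff_le) auto
  with insert show ?case by simp
qed simp

lemma cap_open_UN_incseq_le:
  assumes V: "\<And>n. open (V n)" "incseq V" and t: "\<And>n. cap_open (V n) \<le> t"
  shows "cap_open (\<Union>n. V n) \<le> t"
proof (rule cap_open_least)
  fix H assume H: "clopen_in_C H" "H \<subseteq> (\<Union>n. V n)"
  obtain T where T: "finite T" "H \<subseteq> (\<Union>n\<in>T. V n)"
    using compactE_image[OF compact_clopen_in_C[OF H(1)], of UNIV V] H V(1) by auto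
  have "H \<subseteq> V (Max T)"
  proof
    fix x assume "x \<in> H"
    then obtain n where "n \<in> T" "x \<in> V n"
      using T(2) by blast
    then show "x \<in> V (Max T)"
      using T(1) V(2) by (auto dest: incseqD[of V n "Max T"])
  qed
  then show "P H \<le> t"
    using H(1) t[of "Max T"] cap_open_upper by (meson order_trans)
qed

lemma cap_open_partial_UN_le:
  assumes A: "incseq A" and U: "\<And>n. open (U n)" "\<And>n. A n \<subseteq> U n"
  shows "cap_open (\<Union>k\<le>n. U k) \<le> cap (A n) + (\<Sum>k\<le>n. cap_open (U k) - cap (A k))"
proof (induction n)
  case (Suc n)
  let ?V = "\<Union>k\<le>n. U k"
  have "A n \<subseteq> A (Suc n)"
    using A by (simp add: incseq_SucD)
  then have "A n \<subseteq> ?V \<inter> U (Suc n)"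
    using U(2)[of n] U(2)[of "Suc n"] by auto
  then have "cap (A n) \<le> cap_open (?V \<inter> U (Suc n))"
    using U(1) by (intro cap_lower) auto
  moreover have "cap_open (?V \<union> U (Suc n)) + cap_open (?V \<inter> U (Suc n)) \<le> cap_open ?V + cap_open (U (Suc n))"
    using U(1) by (intro cap_open_strongly_subadditive) auto
  moreover have "(\<Union>k\<le>Suc n. U k) = ?V \<union> U (Suc n)"
    by (auto simp: atMost_Suc)
  ultimately show ?case
    using Suc.IH by simp
qed simp

lemma cap_UN_incseq_le:
  assumes A: "incseq A" and t: "\<And>n. cap (A n) \<le> t"
  shows "cap (\<Union>n. A n) \<le> t"
proof (rule field_le_epsilon)
  fix e :: real assume e: "0 < e"
  have "\<exists>U. open U \<and> A n \<subseteq> U \<and> cap_open U - cap (A n) \<le> e * (1/2)^Suc n" for n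
  proof -
    obtain U where "open U" "A n \<subseteq> U" "cap_open U < cap (A n) + e * (1/2)^Suc n"
      using cap_approx[of "e * (1/2)^Suc n"] e by auto
    then show ?thesis by force
  qed
  then obtain U where U: "\<And>n. open (U n)" "\<And>n. A n \<subseteq> U n"
    "\<And>n. cap_open (U n) - cap (A n) \<le> e * (1/2)^Suc n"
    by metis
  have partial: "cap_open (\<Union>k\<le>n. U k) \<le> t + e" for n
  proof -
    have "(\<Sum>k\<le>n. (1/2::real)^Suc k) \<le> 1"
      using sum_le_suminf[OF sums_summable[OF power_half_series], of "{..n}"] power_half_series
      by (simp add: sums_iff)
    then have "(\<Sum>k\<le>n. e * (1/2)^Suc k) \<le> e"
      using e by (simp only: sum_distrib_left[symmetric] mult_left_le less_imp_le)
    moreover have "(\<Sum>k\<le>n. cap_open (U k) - cap (A k)) \<le> (\<Sum>k\<le>n. e * (1/2)^Suc k)"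
      by (intro sum_mono U(3))
    ultimately show ?thesis
      using cap_open_partial_UN_le[OF A U(1,2), of n] t[of n] by linarith
  qed
  have "incseq (\<lambda>n. \<Union>k\<le>n. U k)"
    by (intro monoI UN_mono) auto
  then have "cap_open (\<Union>n. \<Union>k\<le>n. U k) \<le> t + e"
    using U(1) partial by (intro cap_open_UN_incseq_le) auto
  moreover have "(\<Union>n. \<Union>k\<le>n. U k) = (\<Union>n. U n)"
    by blast
  moreover have "cap (\<Union>n. A n) \<le> cap_open (\<Union>n. U n)"
    using U by (intro cap_lower) auto
  ultimately show "cap (\<Union>n. A n) \<le> t + e" by simp
qed

lemma cap_INT_decseq_compact_ge:
  assumes K: "\<And>n. compact (K n)" "decseq K" and t: "\<And>n. t \<le> cap (K n)"
  shows "t \<le> cap (\<Inter>n. K n)"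
proof (rule cap_greatest)
  fix U assume U: "open U" "(\<Inter>n. K n) \<subseteq> U"
  have "K 0 \<subseteq> (\<Union>n. U \<union> - K n)"
    using U by auto
  moreover have "open (U \<union> - K n)" for n
    using U(1) compact_imp_closed[OF K(1)[of n]] by (intro open_Un) auto
  ultimately obtain T where T: "finite T" "K 0 \<subseteq> (\<Union>n\<in>T. U \<union> - K n)"
    using compactE_image[OF K(1)[of 0], of UNIV "\<lambda>n. U \<union> - K n"] by auto
  have "K (Max T) \<subseteq> U"
  proof
    fix x assume x: "x \<in> K (Max T)"
    have "K (Max T) \<subseteq> K 0"
      using K(2) by (simp add: decseqD)
    then obtain n where n: "n \<in> T" "x \<in> U \<union> - K n"
      using T(2) x by blast
    have "K (Max T) \<subseteq> K n"
      using n(1) T(1) K(2) by (simp add: decseqD)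
    then show "x \<in> U"
      using x n(2) by blast
  qed
  then show "t \<le> cap_open U"
    using U t[of "Max T"] cap_lower[of U "K (Max T)"] by linarith
qed

end

section \<open>Choquet's capacitability theorem\<close>

context clopen_capacity
begin

text \<open>Choquet's argument: bound the entries of the index sequences one at a time, keeping the
  capacity above \<open>t\<close> by continuity from below; the resulting finitely branching levels are
  compact, decrease, and by Koenig's lemma intersect inside the Souslin set.\<close>

lemma cap_souslin_bounded_choice:
  assumes "t < cap (souslin_bounded F b 0)"
  obtains b' where "\<And>m. t < cap (souslin_bounded F b' m)"
proof -
  have step: "\<exists>N. t < cap (souslin_bounded F (b(m := N)) (Suc m))"
    if "t < cap (souslin_bounded F b m)" for b m
  proof (rule ccontr)
    assume "\<nexists>N. t < cap (souslin_bounded F (b(m := N)) (Suc m))"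
    then have "cap (\<Union>N. souslin_bounded F (b(m := N)) (Suc m)) \<le> t"
      by (intro cap_UN_incseq_le incseq_souslin_bounded) (simp add: not_less)
    with that show False
      unfolding souslin_bounded_eq_UN[of F b m] by simp
  qed
  have "\<exists>f. \<forall>m. t < cap (souslin_bounded F (f m) m) \<and> (\<exists>N. f (Suc m) = (f m)(m := N))"
    by (rule dependent_nat_choice) (use assms step in blast)+
  then obtain f where f: "\<And>m. t < cap (souslin_bounded F (f m) m)"
    "\<And>m. \<exists>N. f (Suc m) = (f m)(m := N)"
    by blast
  define b' where "b' i = f (Suc i) i" for i
  have "f m i = b' i" if "i < m" for m i
    using that
  proof (induction m)
    case (Suc m)
    then show ?case
      using f(2)[of m] by (cases "i = m") (auto simp: b'_def)
  qed simp
  then have "souslin_bounded F (f m) m = souslin_bounded F b' m" for m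
    by (intro souslin_bounded_cong) simp
  then show ?thesis
    using that f(1) by metis
qed

lemma souslin_set_capacitable:
  assumes A: "souslin_set A" and t: "t < cap (A \<inter> \<C>)"
  obtains K where "compact K" "K \<subseteq> A \<inter> \<C>" "t \<le> cap K"
proof -
  obtain F where F: "\<And>s. compact (F s)" "\<And>s j. F s \<subseteq> F (take j s)"
    and A_eq: "A \<inter> \<C> = {y. \<exists>x. \<forall>n. y \<in> F (seq_prefix x n)}"
    using souslin_set_compact_scheme[OF A compact_cantor_set] by blast
  obtain b where b: "\<And>m. t < cap (souslin_bounded F b m)"
    using cap_souslin_bounded_choice[of t F] t unfolding A_eq souslin_bounded_0 by blast
  define K where "K m = (\<Union>s\<in>bounded_lists b m. F s)" for m
  have K: "compact (K m)" for m
    unfolding K_def using F(1) finite_bounded_lists by (intro compact_UN) auto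
  have "t \<le> cap (K m)" for m
    using b[of m] cap_mono[OF souslin_bounded_subset_UN[of F b m]] unfolding K_def by simp
  then have "t \<le> cap (\<Inter>m. K m)"
    using K decseq_bounded_levels[OF F(2)] unfolding K_def by (intro cap_INT_decseq_compact_ge) auto
  moreover have "compact (\<Inter>m. K m)"
    using K by (intro compact_Inter) auto
  moreover have "(\<Inter>m. K m) \<subseteq> A \<inter> \<C>"
    unfolding A_eq K_def by (rule INT_bounded_levels_subset[OF F(2)])
  ultimately show ?thesis
    using that by blast
qed

lemma psiB_eq_cap:
  assumes A: "souslin_set A" shows "psiB P (A \<inter> \<C>) = cap (A \<inter> \<C>)"
proof -
  let ?S = "{psiK P K | K. compact K \<and> K \<subseteq> A \<inter> \<C>}"
  have psiK_eq: "psiK P K = cap K" if "compact K" "K \<subseteq> A \<inter> \<C>" for K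
    using that by (intro cap_compact_eq_psiK[symmetric]) auto
  have le: "x \<le> cap (A \<inter> \<C>)" if x: "x \<in> ?S" for x
  proof -
    obtain K where K: "x = psiK P K" "compact K" "K \<subseteq> A \<inter> \<C>"
      using x by blast
    then show ?thesis
      using psiK_eq cap_mono by simp
  qed
  show ?thesis
  proof (rule antisym)
    have "?S \<noteq> {}"
      using compact_empty by blast
    then show "psiB P (A \<inter> \<C>) \<le> cap (A \<inter> \<C>)"
      unfolding psiB_def using le by (rule cSup_least)
    show "cap (A \<inter> \<C>) \<le> psiB P (A \<inter> \<C>)"
    proof (rule field_le_epsilon)
      fix e :: real assume "0 < e"
      then obtain K where K: "compact K" "K \<subseteq> A \<inter> \<C>" "cap (A \<inter> \<C>) - e \<le> cap K"
        using souslin_set_capacitable[OF A, of "cap (A \<inter> \<C>) - e"] by auto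
      then have "cap K \<in> ?S"
        using psiK_eq[OF K(1,2)] by (intro CollectI exI[of _ K]) simp
      then have "cap K \<le> psiB P (A \<inter> \<C>)"
        unfolding psiB_def using le by (intro cSup_upper bdd_aboveI) auto
      with K(3) show "cap (A \<inter> \<C>) \<le> psiB P (A \<inter> \<C>) + e"
        by linarith
    qed
  qed
qed

lemma psiB_clopen: "clopen_in_C H \<Longrightarrow> psiB P H = cap H"
  using psiB_eq_cap[of H] souslin_set_closed compact_imp_closed compact_clopen_in_C clopen_in_C_subset
  by (metis inf.absorb1)

end

context clopen_capacity
begin

lemma cap_sandwich:
  assumes "finite S" "\<And>i. i \<in> S \<Longrightarrow> L i \<subseteq> U i"
    and "(\<Union>i\<in>S. L i) \<subseteq> X" "X \<subseteq> (\<Union>i\<in>S. U i)" "(\<Union>i\<in>S. L i) \<subseteq> Y" "Y \<subseteq> (\<Union>i\<in>S. U i)"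
  shows "\<bar>cap X - cap Y\<bar> \<le> (\<Sum>i\<in>S. cap (U i) - cap (L i))"
proof -
  have "cap (\<Union>i\<in>S. U i) - cap (\<Union>i\<in>S. L i) \<le> (\<Sum>i\<in>S. cap (U i) - cap (L i))"
    using assms(1,2) by (rule cap_UN_diff_le)
  moreover have "cap (\<Union>i\<in>S. L i) \<le> cap X" "cap X \<le> cap (\<Union>i\<in>S. U i)"
    "cap (\<Union>i\<in>S. L i) \<le> cap Y" "cap Y \<le> cap (\<Union>i\<in>S. U i)"
    using assms(3-6) by (auto intro: cap_mono)
  ultimately show ?thesis
    by linarith
qed

lemma souslin_set_squeeze:
  assumes A: "souslin_set A" and e: "0 < e"
  obtains L U where "compact L" "L \<subseteq> A \<inter> \<C>" "open U" "A \<inter> \<C> \<subseteq> U" "cap U - cap L \<le> e"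
proof -
  obtain L where L: "compact L" "L \<subseteq> A \<inter> \<C>" "cap (A \<inter> \<C>) - e / 2 \<le> cap L"
    using souslin_set_capacitable[OF A, of "cap (A \<inter> \<C>) - e / 2"] e by auto
  obtain U where U: "open U" "A \<inter> \<C> \<subseteq> U" "cap_open U < cap (A \<inter> \<C>) + e / 2"
    using cap_approx[of "e / 2"] e by auto
  have "cap U \<le> cap_open U"
    using U(1) by (rule cap_lower) simp
  then show ?thesis
    using that L U by fastforce
qed

lemma cap_preimages_close:
  assumes I: "finite I" and FG: "\<And>x. x \<in> \<C> \<Longrightarrow> F x \<in> I" "\<And>x. x \<in> \<C> \<Longrightarrow> G x \<in> I"
    and L: "\<And>i. i \<in> I \<Longrightarrow> L i \<subseteq> {x \<in> \<C>. F x = i} \<inter> {x \<in> \<C>. G x = i}"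
    and U: "\<And>i. i \<in> I \<Longrightarrow> {x \<in> \<C>. F x = i} \<union> {x \<in> \<C>. G x = i} \<subseteq> U i"
    and e: "0 \<le> e" "\<And>i. i \<in> I \<Longrightarrow> cap (U i) - cap (L i) \<le> e"
  shows "\<bar>cap {x \<in> \<C>. F x \<in> S} - cap {x \<in> \<C>. G x \<in> S}\<bar> \<le> real (card I) * e"
proof -
  let ?S = "S \<inter> I"
  have "{x \<in> \<C>. F x \<in> S} = (\<Union>i\<in>?S. {x \<in> \<C>. F x = i})" "{x \<in> \<C>. G x \<in> S} = (\<Union>i\<in>?S. {x \<in> \<C>. G x = i})"
    using FG by auto
  moreover have "(\<Union>i\<in>?S. L i) \<subseteq> (\<Union>i\<in>?S. {x \<in> \<C>. F x = i})" "(\<Union>i\<in>?S. L i) \<subseteq> (\<Union>i\<in>?S. {x \<in> \<C>. G x = i})"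
    "(\<Union>i\<in>?S. {x \<in> \<C>. F x = i}) \<subseteq> (\<Union>i\<in>?S. U i)" "(\<Union>i\<in>?S. {x \<in> \<C>. G x = i}) \<subseteq> (\<Union>i\<in>?S. U i)"
    using L U by (fastforce+)
  moreover have "L i \<subseteq> U i" if "i \<in> ?S" for i
    using L U that by blast
  ultimately have "\<bar>cap {x \<in> \<C>. F x \<in> S} - cap {x \<in> \<C>. G x \<in> S}\<bar> \<le> (\<Sum>i\<in>?S. cap (U i) - cap (L i))"
    using I by (intro cap_sandwich) auto
  also have "\<dots> \<le> (\<Sum>i\<in>?S. e)"
    using e(2) by (intro sum_mono) auto
  also have "\<dots> \<le> real (card I) * e"
    using e(1) card_mono[OF I, of ?S] by (simp add: mult_right_mono)
  finally show ?thesis .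
qed

lemma clopen_approximation:
  fixes F :: "real \<Rightarrow> 'i"
  assumes I: "finite I" and F: "\<And>x. x \<in> \<C> \<Longrightarrow> F x \<in> I"
    and F_souslin: "\<And>S. \<exists>A. souslin_set A \<and> {x \<in> \<C>. F x \<in> S} = A \<inter> \<C>"
    and d: "0 < d"
  obtains G :: "real \<Rightarrow> 'i" where "\<And>S. clopen_in_C {x \<in> \<C>. G x \<in> S}" "\<And>x. x \<in> \<C> \<Longrightarrow> G x \<in> I"
    "\<And>S. \<bar>psiB P {x \<in> \<C>. F x \<in> S} - psiB P {x \<in> \<C>. G x \<in> S}\<bar> \<le> d"
proof -
  define e where "e = d / (real (card I) + 1)"
  have e: "0 < e" "real (card I) * e \<le> d"
    using d by (auto simp: e_def field_simps)
  define B where "B i = {x \<in> \<C>. F x = i}" for i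
  have "\<exists>L U. compact L \<and> L \<subseteq> B i \<and> open U \<and> B i \<subseteq> U \<and> cap U - cap L \<le> e" for i
  proof -
    obtain A where A: "souslin_set A" "B i = A \<inter> \<C>"
      using F_souslin[of "{i}"] unfolding B_def by auto
    obtain L U where "compact L" "L \<subseteq> A \<inter> \<C>" "open U" "A \<inter> \<C> \<subseteq> U" "cap U - cap L \<le> e"
      by (rule souslin_set_squeeze[OF A(1) e(1)])
    then show ?thesis
      unfolding A(2) by blast
  qed
  then obtain L U where L: "\<And>i. compact (L i)" "\<And>i. L i \<subseteq> B i"
    and U: "\<And>i. open (U i)" "\<And>i. B i \<subseteq> U i" and LU: "\<And>i. cap (U i) - cap (L i) \<le> e"
    by metis
  obtain G :: "real \<Rightarrow> 'i" where G: "\<And>S. clopen_in_C {x \<in> \<C>. G x \<in> S}" "\<And>x. x \<in> \<C> \<Longrightarrow> G x \<in> I"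
    "\<And>i. i \<in> I \<Longrightarrow> L i \<subseteq> {x \<in> \<C>. G x = i}" "\<And>i. i \<in> I \<Longrightarrow> {x \<in> \<C>. G x = i} \<subseteq> U i"
    by (rule clopen_partition_between[OF I, of B L U]) (use L U F in \<open>auto simp: B_def\<close>)
  show ?thesis
  proof (rule that[OF G(1,2)])
    fix S
    obtain A where A: "souslin_set A" "{x \<in> \<C>. F x \<in> S} = A \<inter> \<C>"
      using F_souslin by blast
    have "psiB P {x \<in> \<C>. F x \<in> S} = cap {x \<in> \<C>. F x \<in> S}"
      unfolding A(2) by (rule psiB_eq_cap[OF A(1)])
    moreover have "psiB P {x \<in> \<C>. G x \<in> S} = cap {x \<in> \<C>. G x \<in> S}"
      by (rule psiB_clopen[OF G(1)])
    moreover have "\<bar>cap {x \<in> \<C>. F x \<in> S} - cap {x \<in> \<C>. G x \<in> S}\<bar> \<le> real (card I) * e"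
    proof (rule cap_preimages_close[OF I F G(2)])
      show "L i \<subseteq> {x \<in> \<C>. F x = i} \<inter> {x \<in> \<C>. G x = i}" if "i \<in> I" for i
        using L(2)[of i] G(3)[OF that] unfolding B_def by blast
      show "{x \<in> \<C>. F x = i} \<union> {x \<in> \<C>. G x = i} \<subseteq> U i" if "i \<in> I" for i
        using U(2)[of i] G(4)[OF that] unfolding B_def by blast
    qed (use e(1) LU in auto)
    ultimately show "\<bar>psiB P {x \<in> \<C>. F x \<in> S} - psiB P {x \<in> \<C>. G x \<in> S}\<bar> \<le> d"
      using e(2) by linarith
  qed
qed

end

theorem lemma3p9:
  fixes \<psi>H :: "real set \<Rightarrow> real" and q :: nat and F :: "real \<Rightarrow> nat" and \<epsilon> :: real
  assumes incr: "increasing_on {H. clopen_in_C H} \<psi>H"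
    and submod: "submodular_on {H. clopen_in_C H} \<psi>H"
    and empty: "\<psi>H {} = 0"
    and Fmeas: "F \<in> measurable (restrict_space borel cantor_set) (count_space {1..q})"
    and eps: "\<epsilon> > 0"
  shows "\<exists>G :: real \<Rightarrow> nat. continuous_on cantor_set G \<and> G ` cantor_set \<subseteq> {1..q} \<and>
           setfun_dist q (\<lambda>A. psiB \<psi>H {x \<in> cantor_set. F x \<in> A})
                         (\<lambda>A. psiB \<psi>H {x \<in> cantor_set. G x \<in> A}) < \<epsilon>"
proof -
  interpret clopen_capacity \<psi>H
    using incr submod empty by unfold_locales
  have F: "F x \<in> {1..q}" if "x \<in> \<C>" for x
    using measurable_space[OF Fmeas] that by (simp add: space_restrict_space)
  obtain G :: "real \<Rightarrow> nat" where G: "\<And>S. clopen_in_C {x \<in> \<C>. G x \<in> S}" "\<And>x. x \<in> \<C> \<Longrightarrow> G x \<in> {1..q}"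
    "\<And>S. \<bar>psiB \<psi>H {x \<in> \<C>. F x \<in> S} - psiB \<psi>H {x \<in> \<C>. G x \<in> S}\<bar> \<le> \<epsilon> / 4"
    using clopen_approximation[of "{1..q}" F "\<epsilon> / 4"] F souslin_fibres_of_measurable[OF Fmeas] eps
    by auto
  have "setfun_dist q (\<lambda>A. psiB \<psi>H {x \<in> \<C>. F x \<in> A}) (\<lambda>A. psiB \<psi>H {x \<in> \<C>. G x \<in> A}) \<le> 3 * (\<epsilon> / 4)"
    using G(3) eps by (intro setfun_dist_le) auto
  then show ?thesis
    using continuous_on_clopen_fibres[OF G(1)] G(2) eps by fastforce
qed

end
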